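(* Let $\lambda$ be an infinite cardinal and let $\mu$ be a cardinal with $3\leq\mu\leq\lambda^+$. Then $\lambda^+\not\to_{hc}(\mu)^2_\lambda$: there is a coloring $c:[\lambda^+]^2\to\lambda$ such that for no $\xi<\lambda$ and no $X\subseteq\lambda^+$ with $|X|=\mu$ is the graph $(X,c^{-1}(\xi)\cap[X]^2)$ highly connected.
   Context: $[S]^2$ denotes the set of $2$-element subsets of $S$. A graph $G=(V,E)$ is highly connected if for every $D\subseteq V$ with $|D|<|V|$ the graph induced on $V\setminus D$ is connected. For cardinals $\nu,\mu,\lambda$, $\nu\to_{hc}(\mu)^2_\lambda$ means: for every $c:[\nu]^2\to\lambda$ there exist $\xi<\lambda$ and $X\subseteq\nu$ with $|X|=\mu$ such that $(X,c^{-1}(\xi)\cap[X]^2)$ is highly connected; $\not\to_{hc}$ is its negation. *)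

theory Defs
  imports Main
begin

text \<open>Cardinals are represented by sets up to equipollence, compared with the
  cardinal-order machinery of Main (card_of, ordLeq, ordIso, cardSuc).\<close>

definition two_subsets :: "'a set \<Rightarrow> 'a set set" where
  "two_subsets S = {e. e \<subseteq> S \<and> card e = 2}"

definition graph_connected :: "'a set \<Rightarrow> 'a set set \<Rightarrow> bool" where
  "graph_connected V E \<longleftrightarrow>
     (\<forall>x\<in>V. \<forall>y\<in>V. (\<lambda>a b. a \<in> V \<and> b \<in> V \<and> {a, b} \<in> E)\<^sup>*\<^sup>* x y)"

definition induced_edges :: "'a set set \<Rightarrow> 'a set \<Rightarrow> 'a set set" where
  "induced_edges E W = E \<inter> two_subsets W"

definition highly_connected :: "'a set \<Rightarrow> 'a set set \<Rightarrow> bool" where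
  "highly_connected V E \<longleftrightarrow>
     (\<forall>D \<subseteq> V. (card_of D, card_of V) \<in> ordLess \<longrightarrow> graph_connected (V - D) (induced_edges E (V - D)))"

end

theory Submission
  imports Defs
begin

text \<open>Well-order \<lambda>+ and fix, for every b, an injection f_b from the proper initial segment
  below b into \<lambda>. Colour the edge {a, b} with a below b by f_b(a). Then in every colour class each
  vertex has at most one neighbour below it, i.e.\ each colour class is a forest. Such a graph on a
  set X of at least three vertices is not highly connected: let t be a vertex of X with two
  vertices of X below it, and delete the (at most one) lower neighbour of t. Every path starting
  at t can then only climb, since after climbing to a vertex y the only way down from y is back
  along the edge just used. So t is cut off from the surviving vertex below it.\<close>

unbundle cardinal_syntax

lemma underS_trans:
  assumes "Linear_order R" "a \<in> underS R b" "b \<in> underS R d"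
  shows "a \<in> underS R d"
  using assms unfolding order_on_defs underS_def trans_def antisym_def by blast

lemma underS_asym:
  assumes "Linear_order R" "a \<in> underS R b"
  shows "b \<notin> underS R a"
  using assms unfolding order_on_defs underS_def antisym_def by blast

lemma underS_total:
  assumes "Linear_order R" "a \<in> Field R" "b \<in> Field R" "a \<noteq> b"
  shows "a \<in> underS R b \<or> b \<in> underS R a"
  using assms unfolding order_on_defs total_on_def underS_def by blast

lemma doubleton_eq_underS:
  assumes "Linear_order R" "a \<in> underS R b" "a' \<in> underS R b'" "{a, b} = {a', b'}"
  shows "a = a' \<and> b = b'"
  using assms underS_asym[OF assms(1)] underS_notIn by (metis doubleton_eq_iff)

lemma finite_subset_Field_has_greatest:
  assumes R: "Linear_order R" and "finite S" "S \<noteq> {}" "S \<subseteq> Field R"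
  shows "\<exists>t\<in>S. S - {t} \<subseteq> underS R t"
  using assms(2-)
proof (induction S rule: finite_ne_induct)
  case (singleton x)
  then show ?case by simp
next
  case (insert x S)
  then obtain t where t: "t \<in> S" "S - {t} \<subseteq> underS R t" by auto
  have "x \<noteq> t" using insert.hyps t(1) by blast
  then consider "x \<in> underS R t" | "t \<in> underS R x"
    using underS_total[OF R] insert.prems t(1) by blast
  then show ?case
  proof cases
    case 1
    then show ?thesis using t by blast
  next
    case 2
    then have "S \<subseteq> underS R x" using t underS_trans[OF R] by blast
    then show ?thesis by blast
  qed
qed

lemma two_below_of_three_le_card:
  assumes R: "Linear_order R" and X: "X \<subseteq> Field R" and three: "|{0, 1, 2 :: nat}| \<le>o |X|"
  obtains t u v where "t \<in> X" "u \<in> X" "v \<in> X" "u \<noteq> v" "u \<in> underS R t" "v \<in> underS R t"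
proof -
  obtain g where g: "inj_on g {0, 1, 2 :: nat}" "g ` {0, 1, 2} \<subseteq> X"
    using three unfolding card_of_ordLeq[symmetric] by blast
  define S where "S = g ` {0, 1, 2}"
  have card_S: "card S = 3"
    unfolding S_def using card_image[OF g(1)] by simp
  have S: "finite S" "S \<noteq> {}" "S \<subseteq> X"
    using g(2) unfolding S_def by auto
  then obtain t where t: "t \<in> S" "S - {t} \<subseteq> underS R t"
    using finite_subset_Field_has_greatest[OF R] X by (meson order_trans)
  have "card (S - {t}) = 2"
    using card_S t(1) S(1) by simp
  then obtain u v where uv: "S - {t} = {u, v}" "u \<noteq> v"
    by (auto simp: card_2_iff)
  show thesis
    using that[of t u v] t S(3) uv by auto
qed

definition at_most_one_lower_neighbour :: "'a rel \<Rightarrow> 'a set set \<Rightarrow> bool" where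
  "at_most_one_lower_neighbour R E \<longleftrightarrow>
     (\<forall>b. \<forall>a \<in> underS R b. \<forall>a' \<in> underS R b. {a, b} \<in> E \<longrightarrow> {a', b} \<in> E \<longrightarrow> a = a')"

lemma path_from_vertex_without_lower_neighbour_ascends:
  assumes R: "Linear_order R" and W: "W \<subseteq> Field R"
    and E: "at_most_one_lower_neighbour R E"
    and t: "\<forall>a \<in> W \<inter> underS R t. {a, t} \<notin> E"
    and path: "(\<lambda>a b. a \<in> W \<and> b \<in> W \<and> {a, b} \<in> E)\<^sup>*\<^sup>* t z"
  shows "z = t \<or> t \<in> underS R z"
proof -
  let ?up = "\<lambda>a b. a \<in> W \<and> a \<in> underS R b \<and> {a, b} \<in> E"
  from path have "?up\<^sup>*\<^sup>* t z"
  proof (induction rule: rtranclp_induct)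
    case base
    then show ?case by simp
  next
    case (step y w)
    then have yw: "y \<in> W" "w \<in> W" "{w, y} \<in> E" by (auto simp: insert_commute)
    consider "y = w" | "y \<in> underS R w" | "w \<in> underS R y"
      using underS_total[OF R] W yw(1,2) by blast
    then show ?case
    proof cases
      case 1
      then show ?thesis using step.IH by simp
    next
      case 2
      then show ?thesis using step.IH yw by (simp add: insert_commute rtranclp.rtrancl_into_rtrancl)
    next
      case 3
      \<comment> \<open>The increasing path ends with an edge from below into y; it must be the edge from w.\<close>
      from step.IH show ?thesis
      proof (cases rule: rtranclp.cases)
        case rtrancl_refl
        then show ?thesis using t yw 3 by blast
      next
        case (rtrancl_into_rtrancl a)
        then have "a = w" using E 3 yw(3) unfolding at_most_one_lower_neighbour_def by blast
        with rtrancl_into_rtrancl show ?thesis by simp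
      qed
    qed
  qed
  then show ?thesis
    by induction (auto dest: underS_trans[OF R])
qed

lemma not_highly_connected_if_at_most_one_lower_neighbour:
  assumes R: "Linear_order R" and X: "X \<subseteq> Field R" and three: "|{0, 1, 2 :: nat}| \<le>o |X|"
    and E: "at_most_one_lower_neighbour R E"
  shows "\<not> highly_connected X E"
proof
  assume hc: "highly_connected X E"
  obtain t u v where tuv: "t \<in> X" "u \<in> X" "v \<in> X" "u \<noteq> v" "u \<in> underS R t" "v \<in> underS R t"
    using two_below_of_three_le_card[OF R X three] .
  define D where "D = {a \<in> X \<inter> underS R t. {a, t} \<in> E}"
  have D_subsingleton: "a = a'" if "a \<in> D" "a' \<in> D" for a a'
  proof -
    have "a \<in> underS R t" "{a, t} \<in> E" "a' \<in> underS R t" "{a', t} \<in> E"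
      using that unfolding D_def by auto
    then show ?thesis using E unfolding at_most_one_lower_neighbour_def by blast
  qed
  have "u \<notin> D \<or> v \<notin> D"
    using D_subsingleton tuv(4) by blast
  then obtain z where z: "z \<in> X - D" "z \<in> underS R t"
    using tuv(2,3,5,6) by blast
  have "\<nexists>h. inj_on h X \<and> h ` X \<subseteq> D"
  proof
    assume "\<exists>h. inj_on h X \<and> h ` X \<subseteq> D"
    then obtain h where h: "inj_on h X" "h ` X \<subseteq> D" by blast
    then have "h u = h v"
      using D_subsingleton tuv(2,3) by blast
    then show False
      using inj_onD[OF h(1)] tuv(2-4) by blast
  qed
  then have "|D| <o |X|"
    unfolding card_of_ordLess .
  moreover have "D \<subseteq> X"
    unfolding D_def by blast
  ultimately have "graph_connected (X - D) (induced_edges E (X - D))"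
    using hc unfolding highly_connected_def by blast
  moreover have "t \<in> X - D"
    using tuv(1) underS_notIn unfolding D_def by fastforce
  ultimately have "(\<lambda>a b. a \<in> X - D \<and> b \<in> X - D \<and> {a, b} \<in> induced_edges E (X - D))\<^sup>*\<^sup>* t z"
    using z(1) unfolding graph_connected_def by blast
  then have path: "(\<lambda>a b. a \<in> X - D \<and> b \<in> X - D \<and> {a, b} \<in> E)\<^sup>*\<^sup>* t z"
    by (rule rtranclp_mono[THEN predicate2D, rotated]) (auto simp: induced_edges_def)
  have "X - D \<subseteq> Field R"
    using X by blast
  moreover have "\<forall>a \<in> (X - D) \<inter> underS R t. {a, t} \<notin> E"
    unfolding D_def by blast
  ultimately have "z = t \<or> t \<in> underS R z"
    using path_from_vertex_without_lower_neighbour_ascends[OF R _ E _ path] by blast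
  then show False
    using z(2) underS_asym[OF R, of z t] underS_notIn[of z R] by blast
qed

lemma colouring_injective_below:
  assumes R: "Linear_order R" and L: "L \<noteq> {}"
    and small: "\<forall>b \<in> Field R. |underS R b| \<le>o |L|"
  obtains c :: "'a set \<Rightarrow> 'b" where "\<forall>e. c e \<in> L" "\<forall>b. inj_on (\<lambda>a. c {a, b}) (underS R b)"
proof -
  have "\<forall>b. \<exists>g. inj_on g (underS R b) \<and> g ` underS R b \<subseteq> L"
  proof
    fix b
    show "\<exists>g. inj_on g (underS R b) \<and> g ` underS R b \<subseteq> L"
    proof (cases "b \<in> Field R")
      case True
      then show ?thesis using small unfolding card_of_ordLeq[symmetric] by blast
    qed (simp add: underS_empty)
  qed
  from choice[OF this] obtain f
    where f: "\<forall>b. inj_on (f b) (underS R b) \<and> f b ` underS R b \<subseteq> L" ..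
  \<comment> \<open>Set c {a, b} = f b a for a below b, which determines the pair; elsewhere c is arbitrary in L.\<close>
  have "\<forall>e. \<exists>x. x \<in> L \<and> (\<forall>a b. a \<in> underS R b \<and> e = {a, b} \<longrightarrow> x = f b a)"
  proof
    fix e
    show "\<exists>x. x \<in> L \<and> (\<forall>a b. a \<in> underS R b \<and> e = {a, b} \<longrightarrow> x = f b a)"
    proof (cases "\<exists>a b. a \<in> underS R b \<and> e = {a, b}")
      case True
      then obtain a b where ab: "a \<in> underS R b" "e = {a, b}" by blast
      have "f b a \<in> L" using f ab(1) by blast
      moreover have "a' = a \<and> b' = b" if "a' \<in> underS R b'" "e = {a', b'}" for a' b'
        using doubleton_eq_underS[OF R ab(1) that(1)] ab(2) that(2) by simp
      ultimately show ?thesis by blast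
    qed (use L in blast)
  qed
  from choice[OF this] obtain c
    where c: "\<forall>e. c e \<in> L \<and> (\<forall>a b. a \<in> underS R b \<and> e = {a, b} \<longrightarrow> c e = f b a)" ..
  have "inj_on (\<lambda>a. c {a, b}) (underS R b)" for b
    using f c unfolding inj_on_def by metis
  then show thesis using that c by blast
qed

lemma underS_cardSuc_ordLeq:
  assumes "b \<in> Field (cardSuc (card_of L))"
  shows "|underS (cardSuc (card_of L)) b| \<le>o |L|"
  using card_of_underS[OF cardSuc_Card_order[OF card_of_Card_order] assms]
    cardSuc_ordLeq_ordLess[OF card_of_Card_order card_of_Card_order] by blast

theorem mainTheorem3:
  fixes L :: "'a set" and M :: "'b set"
  assumes "infinite L"
    and "(card_of {0, 1, 2 :: nat}, card_of M) \<in> ordLeq"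
    and "(card_of M, cardSuc (card_of L)) \<in> ordLeq"
  shows "\<exists>c :: 'a set set \<Rightarrow> 'a.
           (\<forall>e \<in> two_subsets (Field (cardSuc (card_of L))). c e \<in> L) \<and>
           \<not> (\<exists>\<xi> \<in> L. \<exists>X \<subseteq> Field (cardSuc (card_of L)). (card_of X, card_of M) \<in> ordIso \<and>
                 highly_connected X {e \<in> two_subsets X. c e = \<xi>})"
proof -
  define R where "R = cardSuc (card_of L)"
  have R: "Linear_order R"
    using card_order_on_well_order_on[OF cardSuc_Card_order[OF card_of_Card_order]]
    unfolding R_def well_order_on_def by blast
  have L: "L \<noteq> {}"
    using assms(1) by blast
  have small: "\<forall>b \<in> Field R. |underS R b| \<le>o |L|"
    unfolding R_def using underS_cardSuc_ordLeq by blast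
  obtain c :: "'a set set \<Rightarrow> 'a" where c_L: "\<forall>e. c e \<in> L"
    and c_inj: "\<forall>b. inj_on (\<lambda>a. c {a, b}) (underS R b)"
    using colouring_injective_below[OF R L small] .
  have not_hc: "\<not> highly_connected X {e \<in> two_subsets X. c e = \<xi>}"
    if X: "X \<subseteq> Field R" and XM: "|X| =o |M|" for X \<xi>
  proof (rule not_highly_connected_if_at_most_one_lower_neighbour[OF R X])
    show "|{0, 1, 2 :: nat}| \<le>o |X|"
      using ordLeq_ordIso_trans[OF assms(2) ordIso_symmetric[OF XM]] .
    show "at_most_one_lower_neighbour R {e \<in> two_subsets X. c e = \<xi>}"
      unfolding at_most_one_lower_neighbour_def using c_inj by (auto dest: inj_onD)
  qed
  show ?thesis
  proof (intro exI[of _ c] conjI)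
    show "\<forall>e \<in> two_subsets (Field (cardSuc (card_of L))). c e \<in> L"
      using c_L by blast
    show "\<not> (\<exists>\<xi> \<in> L. \<exists>X \<subseteq> Field (cardSuc (card_of L)). |X| =o |M| \<and>
                 highly_connected X {e \<in> two_subsets X. c e = \<xi>})"
      using not_hc unfolding R_def by blast
  qed
qed

end
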